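(* Let $A\ge0$, $C_0,C_1>0$ and let $f$ be a multiplicative function with (i) $|f(p)|\le C_0$ for every prime $p$; (ii) $\sum_{n\le X}|f(n)|\le C_1X$ for all $X\ge1$; (iii) $\sum_{n\le X}|f(n)|^2\le C_1X(\log X)^A$ for all $X\ge2$. Let $g:\mathbb{N}\to\mathbb{R}$ be any function and $\epsilon>0$. Then for every integer $N\ge2$, $$\left|\sum_{1\le n\le N}f(n)e(g(n))\right|\ll\frac{N}{(\log N)^{1-\epsilon}}+\frac1{\log N}\left|\sum_{\substack{1\le np\le N}}f(n)f(p)(\log p)\,e(g(np))\right|,$$ where in the last sum $n$ ranges over positive integers and $p$ over primes, and the implied constant depends only on $\epsilon,A,C_0,C_1$.
   Context: $e(x)=\exp(2\pi ix)$. *)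

theory Defs
  imports "HOL-Analysis.Analysis" "HOL-Computational_Algebra.Primes"
begin

definition e :: "real \<Rightarrow> complex" where
  "e x = exp (2 * of_real pi * \<i> * of_real x)"

text \<open>Multiplicative arithmetic function (values at positive integers; f(0) is irrelevant).\<close>
definition multiplicative :: "(nat \<Rightarrow> complex) \<Rightarrow> bool" where
  "multiplicative f \<longleftrightarrow> f 1 = 1 \<and>
     (\<forall>m n. 0 < m \<longrightarrow> 0 < n \<longrightarrow> coprime m n \<longrightarrow> f (m * n) = f m * f n)"

end

(* For n \<le> N write ln N = ln (N/n) + \<Sum>\<^bsub>p \<parallel> n\<^esub> ln p + ln (powerful part of n).  Multiplying by
   f(n) e(g(n)) and summing, the middle term becomes, by multiplicativity, the bilinear sum over
   pairs (m, p) with p \<nmid> m, which differs from the full bilinear sum by the pairs with p | m.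
   Hence ln N times the exponential sum minus the bilinear sum is bounded by three error terms:
   \<Sum> |f(n)| ln (N/n) \<ll> N by partial summation; the pairs with p | m, where primes p \<le> P give
   \<ll> N (ln P)^2 and the at most N/P pairs with p > P are handled by Cauchy-Schwarz and the
   second moment; and \<Sum> |f(n)| ln (powerful part of n), where prime powers p^j with p \<le> P and
   j < J are controlled through |f(p^j)|^2 \<le> C1 p^j (j ln p)^A, while the remaining n (divisible
   by p^2 with p > P or by p^J with p \<le> P) number at most N/P + P N / 2^J and are handled
   by Cauchy-Schwarz as well.  Choosing P \<approx> (ln N)^(A+3) and 2^J \<ge> P^3 makes every error term
   \<ll> N (ln ln N)^(A+4) \<ll> N (ln N)^\<epsilon>. *)

theory Submission
  imports Defs "HOL-Analysis.Harmonic_Numbers"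
begin

lemma harm_le_1_plus_ln:
  assumes "1 \<le> n" shows "harm n \<le> 1 + ln (real n)"
proof -
  obtain m where n: "n = Suc m" using assms by (cases n) auto
  have "harm (Suc m) - ln (real (Suc m)) \<le> harm (Suc 0) - ln (real (Suc 0))"
    using decseq_harm_diff_ln by (rule decseqD) simp
  moreover have "harm (Suc 0) = (1::real)" by (simp add: harm_def)
  ultimately show ?thesis unfolding n by simp
qed

lemma sum_primes_ln_div_le:
  assumes "1 \<le> P"
  shows "(\<Sum>p\<in>{p. prime p \<and> p \<le> P}. ln (real p) / real p) \<le> ln (real P) * (1 + ln (real P))"
proof -
  have "(\<Sum>p\<in>{p. prime p \<and> p \<le> P}. ln (real p) / real p) \<le> (\<Sum>p\<in>{p. prime p \<and> p \<le> P}. ln (real P) / real p)"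
    by (intro sum_mono divide_right_mono) (auto dest: prime_gt_0_nat)
  also have "\<dots> \<le> (\<Sum>p\<in>{1..P}. ln (real P) / real p)"
    using assms by (intro sum_mono2) (auto dest: prime_gt_0_nat)
  also have "\<dots> = ln (real P) * harm P"
    by (simp add: harm_def sum_distrib_left divide_inverse)
  also have "\<dots> \<le> ln (real P) * (1 + ln (real P))"
    using harm_le_1_plus_ln[OF assms] assms by (intro mult_left_mono) auto
  finally show ?thesis .
qed

lemma sum_inverse_squares_greaterThanAtMost_le:
  assumes "1 \<le> a" shows "(\<Sum>k\<in>{a<..b}. 1 / (real k)\<^sup>2) \<le> 1 / real a"
proof (cases "a \<le> b")
  case True
  have "(\<Sum>k\<in>{a<..b}. 1 / (real k)\<^sup>2) \<le> 1 / real a - 1 / real b"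
    using True
  proof (induction b rule: nat_induct_at_least)
    case (Suc b)
    have b: "real b > 0" using Suc assms by simp
    have "1 / (real (Suc b))\<^sup>2 \<le> 1 / (real b * real (Suc b))"
      using b by (intro divide_left_mono) (auto simp: power2_eq_square)
    also have "\<dots> = 1 / real b - 1 / real (Suc b)" using b by (simp add: field_simps)
    finally have "1 / (real (Suc b))\<^sup>2 \<le> 1 / real b - 1 / real (Suc b)" .
    moreover have "{a<..Suc b} = insert (Suc b) {a<..b}" using Suc by auto
    ultimately show ?case using Suc by simp
  qed simp
  also have "\<dots> \<le> 1 / real a" by simp
  finally show ?thesis .
qed simp

lemma sum_le_sqrt_card_mult_sum_squares:
  fixes x :: "'a \<Rightarrow> real"
  shows "(\<Sum>i\<in>I. x i) \<le> sqrt (real (card I) * (\<Sum>i\<in>I. (x i)\<^sup>2))"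
  by (rule real_le_rsqrt) (use sum_squared_le_sum_of_squares[of x I] in \<open>simp add: mult.commute\<close>)

lemma card_multiples_le:
  assumes "0 < d" shows "card {n\<in>{1..N::nat}. d dvd n} \<le> N div d"
proof -
  have "{n\<in>{1..N}. d dvd n} \<subseteq> (\<lambda>k. d * k) ` {1..N div d}"
  proof
    fix n assume n: "n \<in> {n\<in>{1..N}. d dvd n}"
    then obtain k where k: "n = d * k" by auto
    with n assms have "1 \<le> k" "k \<le> N div d"
      by (auto simp: less_eq_div_iff_mult_less_eq mult.commute intro: Suc_leI)
    then show "n \<in> (\<lambda>k. d * k) ` {1..N div d}" using k by auto
  qed
  then have "card {n\<in>{1..N}. d dvd n} \<le> card ((\<lambda>k. d * k) ` {1..N div d})"
    by (intro card_mono) auto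
  also have "\<dots> \<le> N div d" using card_image_le[of "{1..N div d}" "\<lambda>k. d * k"] by simp
  finally show ?thesis .
qed

lemma sum_large_primes_div_square_le:
  assumes "1 \<le> P"
  shows "(\<Sum>p\<in>{p. prime p \<and> P < p \<and> p \<le> N}. real (N div p\<^sup>2)) \<le> real N / real P"
proof -
  have "(\<Sum>p\<in>{p. prime p \<and> P < p \<and> p \<le> N}. real (N div p\<^sup>2))
      \<le> (\<Sum>p\<in>{p. prime p \<and> P < p \<and> p \<le> N}. real N * (1 / (real p)\<^sup>2))"
    using of_nat_div_le_of_nat[of N "_\<^sup>2"] by (intro sum_mono) simp
  also have "\<dots> \<le> (\<Sum>p\<in>{P<..N}. real N * (1 / (real p)\<^sup>2))"
    by (rule sum_mono2) auto
  also have "\<dots> \<le> real N * (1 / real P)"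
    unfolding sum_distrib_left[symmetric]
    using sum_inverse_squares_greaterThanAtMost_le[OF assms] by (intro mult_left_mono) auto
  finally show ?thesis by simp
qed

lemma sum_small_primes_div_power_le:
  "(\<Sum>p\<in>{p. prime p \<and> p \<le> P}. real (N div p ^ J)) \<le> real P * real N / 2 ^ J"
proof -
  let ?primes = "{p. prime p \<and> p \<le> P}"
  have "(\<Sum>p\<in>?primes. real (N div p ^ J)) \<le> (\<Sum>p\<in>?primes. real N / 2 ^ J)"
  proof (rule sum_mono)
    fix p assume "p \<in> ?primes"
    then have "0 < real p" "(2::real) ^ J \<le> real p ^ J"
      using prime_ge_2_nat[of p] by (auto intro: power_mono)
    then have "real N / real (p ^ J) \<le> real N / 2 ^ J" by (intro divide_left_mono) auto
    moreover have "real (N div p ^ J) \<le> real N / real (p ^ J)" by (rule of_nat_div_le_of_nat)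
    ultimately show "real (N div p ^ J) \<le> real N / 2 ^ J" by linarith
  qed
  also have "\<dots> \<le> real P * (real N / 2 ^ J)"
  proof -
    have "card ?primes \<le> card {1..P}" by (rule card_mono) (auto dest: prime_ge_1_nat)
    then have "real (card ?primes) * (real N / 2 ^ J) \<le> real P * (real N / 2 ^ J)"
      by (intro mult_right_mono) simp_all
    then show ?thesis by simp
  qed
  finally show ?thesis by simp
qed

lemma ln_eq_sum_multiplicity_ln:
  assumes "0 < n"
  shows "ln (real n) = (\<Sum>p\<in>prime_factors n. real (multiplicity p n) * ln (real p))"
proof -
  have "real n = real (\<Prod>p\<in>prime_factors n. p ^ multiplicity p n)"
    using prod_prime_factors[of n] assms by simp
  then have "ln (real n) = ln (\<Prod>p\<in>prime_factors n. real p ^ multiplicity p n)" by simp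
  also have "\<dots> = (\<Sum>p\<in>prime_factors n. ln (real p ^ multiplicity p n))"
    by (intro ln_prod) (auto dest: in_prime_factors_imp_prime prime_gt_0_nat)
  also have "\<dots> = (\<Sum>p\<in>prime_factors n. real (multiplicity p n) * ln (real p))"
    by (rule sum.cong) (auto simp: ln_realpow dest: in_prime_factors_imp_prime prime_gt_0_nat)
  finally show ?thesis .
qed

lemma card_prime_factors_le_2_ln:
  assumes "0 < n" shows "real (card (prime_factors n)) \<le> 2 * ln (real n)"
proof -
  have "(2::nat) ^ card (prime_factors n) = (\<Prod>p\<in>prime_factors n. 2)" by simp
  also have "\<dots> \<le> (\<Prod>p\<in>prime_factors n. p ^ multiplicity p n)"
  proof (intro prod_mono ballI conjI)
    fix p assume "p \<in> prime_factors n"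
    then have "2 \<le> p" "0 < multiplicity p n" by (auto simp: prime_factors_multiplicity prime_ge_2_nat)
    then show "2 \<le> p ^ multiplicity p n" using self_le_power[of p "multiplicity p n"] by linarith
  qed simp
  also have "\<dots> = n" using prod_prime_factors[of n] assms by simp
  finally have "(2::real) ^ card (prime_factors n) \<le> real n"
    by (metis of_nat_le_iff of_nat_numeral of_nat_power)
  then have "real (card (prime_factors n)) * ln 2 \<le> ln (real n)"
    by (metis ln_le_cancel_iff ln_realpow zero_less_numeral zero_less_power
              order_less_le_trans)
  moreover have "real (card (prime_factors n)) * (1/2) \<le> real (card (prime_factors n)) * ln 2"
    using ln2_ge_two_thirds by (intro mult_left_mono) auto
  ultimately show ?thesis by linarith
qed

section \<open>The powerful part of an integer\<close>

lemma ln_prime_nonneg: "prime p \<Longrightarrow> 0 \<le> ln (real p)"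
  using prime_ge_1_nat by simp

lemma prime_power_dvd_iff_le_multiplicity:
  "prime (p::nat) \<Longrightarrow> n \<noteq> 0 \<Longrightarrow> p ^ k dvd n \<longleftrightarrow> k \<le> multiplicity p n"
  by (rule power_dvd_iff_le_multiplicity) (auto simp: not_prime_unit)

definition ln_powerful_part :: "nat \<Rightarrow> real" where
  "ln_powerful_part n =
     (\<Sum>p\<in>{p\<in>prime_factors n. 2 \<le> multiplicity p n}. real (multiplicity p n) * ln (real p))"

lemma ln_powerful_part_nonneg: "0 \<le> ln_powerful_part n"
  unfolding ln_powerful_part_def by (intro sum_nonneg) (auto intro!: mult_nonneg_nonneg ln_prime_nonneg)

lemma ln_eq_sum_simple_primes_plus_ln_powerful_part:
  assumes "0 < n"
  shows "ln (real n) = (\<Sum>p\<in>{p\<in>prime_factors n. multiplicity p n = 1}. ln (real p)) + ln_powerful_part n"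
proof -
  have split: "prime_factors n = {p\<in>prime_factors n. multiplicity p n = 1} \<union> {p\<in>prime_factors n. 2 \<le> multiplicity p n}"
    by (auto simp: prime_factors_multiplicity)
  have "ln (real n) = (\<Sum>p\<in>prime_factors n. real (multiplicity p n) * ln (real p))"
    using ln_eq_sum_multiplicity_ln assms by blast
  also have "\<dots> = (\<Sum>p\<in>{p\<in>prime_factors n. multiplicity p n = 1}. real (multiplicity p n) * ln (real p))
                 + ln_powerful_part n"
    unfolding ln_powerful_part_def by (subst split, subst sum.union_disjoint) auto
  also have "(\<Sum>p\<in>{p\<in>prime_factors n. multiplicity p n = 1}. real (multiplicity p n) * ln (real p))
           = (\<Sum>p\<in>{p\<in>prime_factors n. multiplicity p n = 1}. ln (real p))"
    by (rule sum.cong) auto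
  finally show ?thesis .
qed

lemma ln_powerful_part_le_ln:
  assumes "0 < n" shows "ln_powerful_part n \<le> ln (real n)"
proof -
  have "0 \<le> (\<Sum>p\<in>{p\<in>prime_factors n. multiplicity p n = 1}. ln (real p))"
    by (intro sum_nonneg) (auto intro: ln_prime_nonneg)
  then show ?thesis using ln_eq_sum_simple_primes_plus_ln_powerful_part[OF assms] by linarith
qed

lemma ln_powerful_part_le_truncated:
  assumes "0 < n"
  shows "ln_powerful_part n \<le>
           (\<Sum>p\<in>{p. prime p \<and> p \<le> P}.
              if 2 \<le> multiplicity p n \<and> multiplicity p n < J then real (multiplicity p n) * ln (real p) else 0)
         + (if (\<exists>p. prime p \<and> P < p \<and> p\<^sup>2 dvd n) \<or> (\<exists>p. prime p \<and> p \<le> P \<and> p ^ J dvd n)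
            then ln (real n) else 0)"
    (is "_ \<le> ?trunc + (if ?exceptional then _ else _)")
proof (cases ?exceptional)
  case True
  have "0 \<le> ?trunc" by (intro sum_nonneg) (auto intro!: mult_nonneg_nonneg ln_prime_nonneg)
  then show ?thesis using True ln_powerful_part_le_ln[OF assms] by simp
next
  case False
  let ?Q = "{p\<in>prime_factors n. 2 \<le> multiplicity p n}"
  have small: "p \<le> P \<and> multiplicity p n < J" if "p \<in> ?Q" for p
  proof -
    have p: "prime p" "p\<^sup>2 dvd n"
      using that assms prime_power_dvd_iff_le_multiplicity[of p n 2] by auto
    then have "p \<le> P" using False by (auto simp: not_less)
    moreover have "\<not> p ^ J dvd n" using False p \<open>p \<le> P\<close> by auto
    ultimately show ?thesis
      using assms prime_power_dvd_iff_le_multiplicity[of p n J] p by auto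
  qed
  have "?trunc = (\<Sum>p\<in>?Q. real (multiplicity p n) * ln (real p))"
  proof (rule sum.mono_neutral_cong_right)
    show "?Q \<subseteq> {p. prime p \<and> p \<le> P}" using small by auto
    show "\<forall>p\<in>{p. prime p \<and> p \<le> P} - ?Q.
            (if 2 \<le> multiplicity p n \<and> multiplicity p n < J then real (multiplicity p n) * ln (real p) else 0) = 0"
      using assms by (auto simp: prime_factors_multiplicity)
  qed (use small in \<open>auto intro: finite_subset[of _ "{..P}"]\<close>)
  moreover have "(if ?exceptional then ln (real n) else 0) = 0" using False by (rule if_not_P)
  ultimately show ?thesis unfolding ln_powerful_part_def by linarith
qed

lemma prime_pair_le:
  fixes n p N :: nat
  assumes "1 \<le> n" "prime p" "n * p \<le> N"
  shows "n \<le> N" "p \<le> N"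
  using assms prime_ge_1_nat[of p] by (metis le_trans mult_le_mono2 mult_1_right, metis le_trans mult_le_mono1 mult_1)

lemma finite_prime_pairs: "finite {(n, p). 1 \<le> n \<and> prime p \<and> n * p \<le> (N::nat)}"
proof (rule finite_subset[of _ "{1..N} \<times> {1..N}"])
  show "{(n, p). 1 \<le> n \<and> prime p \<and> n * p \<le> N} \<subseteq> {1..N} \<times> {1..N}"
  proof
    fix x assume "x \<in> {(n, p). 1 \<le> n \<and> prime p \<and> n * p \<le> N}"
    then obtain n p where "x = (n, p)" "1 \<le> n" "prime p" "n * p \<le> N" by auto
    then show "x \<in> {1..N} \<times> {1..N}" using prime_pair_le[of n p N] prime_ge_1_nat[of p] by auto
  qed
qed simp

lemma finite_prime_pairs_restrict: "finite {(n, p). 1 \<le> n \<and> prime p \<and> n * p \<le> (N::nat) \<and> Q n p}"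
  by (rule finite_subset[OF _ finite_prime_pairs]) auto

lemma bij_betw_coprime_prime_pairs:
  "bij_betw (\<lambda>(m, p). (m * p, p)) {(m, p). 1 \<le> m \<and> prime p \<and> m * p \<le> (N::nat) \<and> \<not> p dvd m}
     (SIGMA n:{1..N}. {p\<in>prime_factors n. multiplicity p n = 1})"
proof (rule bij_betw_byWitness[where f' = "\<lambda>(n, p). (n div p, p)"])
  show "\<forall>a\<in>{(m, p). 1 \<le> m \<and> prime p \<and> m * p \<le> N \<and> \<not> p dvd m}.
          (\<lambda>(n, p). (n div p, p)) ((\<lambda>(m, p). (m * p, p)) a) = a"
    by (auto dest: prime_gt_0_nat)
  show "\<forall>b\<in>(SIGMA n:{1..N}. {p\<in>prime_factors n. multiplicity p n = 1}).
          (\<lambda>(m, p). (m * p, p)) ((\<lambda>(n, p). (n div p, p)) b) = b"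
    by (auto simp: in_prime_factors_iff)
  show "(\<lambda>(m, p). (m * p, p)) ` {(m, p). 1 \<le> m \<and> prime p \<and> m * p \<le> N \<and> \<not> p dvd m}
          \<subseteq> (SIGMA n:{1..N}. {p\<in>prime_factors n. multiplicity p n = 1})"
  proof
    fix y assume "y \<in> (\<lambda>(m, p). (m * p, p)) ` {(m, p). 1 \<le> m \<and> prime p \<and> m * p \<le> N \<and> \<not> p dvd m}"
    then obtain m p where y: "y = (m * p, p)" and mp: "1 \<le> m" "prime p" "m * p \<le> N" "\<not> p dvd m" by auto
    then have "0 < p" by (simp add: prime_gt_0_nat)
    moreover have "multiplicity p (m * p) = 1"
      by (rule multiplicity_decomposeI[where x' = m]) (use mp \<open>0 < p\<close> in auto)
    ultimately show "y \<in> (SIGMA n:{1..N}. {p\<in>prime_factors n. multiplicity p n = 1})"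
      using y mp by (auto simp: in_prime_factors_iff)
  qed
  show "(\<lambda>(n, p). (n div p, p)) ` (SIGMA n:{1..N}. {p\<in>prime_factors n. multiplicity p n = 1})
          \<subseteq> {(m, p). 1 \<le> m \<and> prime p \<and> m * p \<le> N \<and> \<not> p dvd m}"
  proof
    fix y assume "y \<in> (\<lambda>(n, p). (n div p, p)) ` (SIGMA n:{1..N}. {p\<in>prime_factors n. multiplicity p n = 1})"
    then obtain n p where y: "y = (n div p, p)" and n: "n \<in> {1..N}"
      and p: "p \<in> prime_factors n" "multiplicity p n = 1" by auto
    then have "prime p" "p dvd n" and np: "n div p * p = n" by (auto simp: in_prime_factors_iff)
    have "\<not> p\<^sup>2 dvd n" using p n prime_power_dvd_iff_le_multiplicity[of p n 2] by auto
    then have "\<not> p dvd n div p" using np by (metis mult_dvd_mono dvd_refl power2_eq_square)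
    moreover have "n div p \<noteq> 0" using np n by (metis atLeastAtMost_iff mult_zero_left not_one_le_zero)
    ultimately show "y \<in> {(m, p). 1 \<le> m \<and> prime p \<and> m * p \<le> N \<and> \<not> p dvd m}"
      using y n np \<open>prime p\<close> by auto
  qed
qed

lemma norm_e [simp]: "norm (e x) = 1"
  unfolding e_def by simp

text \<open>Hypotheses (ii) and (iii) are only needed at integers \<open>X\<close>.\<close>
locale moment_bounded_multiplicative =
  fixes f :: "nat \<Rightarrow> complex" and C0 C1 A :: real and N :: nat
  assumes multiplicative: "multiplicative f"
    and norm_prime_le: "\<And>p. prime p \<Longrightarrow> norm (f p) \<le> C0"
    and first_moment: "\<And>x. (\<Sum>n\<in>{1..x}. norm (f n)) \<le> C1 * real x"
    and second_moment: "\<And>x. 2 \<le> x \<Longrightarrow> (\<Sum>n\<in>{1..x}. (norm (f n))\<^sup>2) \<le> C1 * real x * ln (real x) powr A"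
    and N_ge_2: "2 \<le> N" and A_nonneg: "0 \<le> A" and C1_pos: "0 < C1"
begin

lemma mult_coprime: "0 < m \<Longrightarrow> 0 < n \<Longrightarrow> coprime m n \<Longrightarrow> f (m * n) = f m * f n"
  using multiplicative unfolding multiplicative_def by blast

lemma C0_nonneg: "0 \<le> C0"
  using norm_prime_le[of 2] by (metis norm_ge_zero order_trans two_is_prime_nat)

lemma second_moment_N: "(\<Sum>n\<in>{1..N}. (norm (f n))\<^sup>2) \<le> C1 * real N * ln (real N) powr A"
  using second_moment N_ge_2 by blast

text \<open>Partial summation: passing from \<open>x\<close> to \<open>x + 1\<close> adds \<open>ln ((x+1)/x) \<le> 1/x\<close> times the
  first moment up to \<open>x\<close>.\<close>
lemma sum_norm_mult_ln_ratio_le: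
  "1 \<le> x \<Longrightarrow> (\<Sum>n\<in>{1..x}. norm (f n) * (ln (real x) - ln (real n))) \<le> C1 * real x"
proof (induction x rule: nat_induct_at_least)
  case base then show ?case using C1_pos by simp
next
  case (Suc x)
  let ?d = "ln (real (Suc x)) - ln (real x)"
  have d_nonneg: "0 \<le> ?d" using Suc by simp
  have "ln (real (Suc x) / real x) \<le> real (Suc x) / real x - 1"
    using Suc by (intro ln_le_minus_one) auto
  then have d_le: "?d \<le> 1 / real x" using Suc by (simp add: ln_div field_simps)
  have "(\<Sum>n\<in>{1..Suc x}. norm (f n) * (ln (real (Suc x)) - ln (real n)))
      = (\<Sum>n\<in>{1..x}. norm (f n) * (ln (real x) - ln (real n))) + ?d * (\<Sum>n\<in>{1..x}. norm (f n))"
    by (simp add: algebra_simps sum.distrib sum_distrib_left sum_subtractf)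
  also have "\<dots> \<le> C1 * real x + (1 / real x) * (C1 * real x)"
    using Suc.IH first_moment[of x] d_nonneg d_le by (intro add_mono mult_mono) (auto intro: sum_nonneg)
  also have "\<dots> = C1 * real (Suc x)" using Suc by (simp add: field_simps)
  finally show ?case .
qed

lemma norm_prime_power_le:
  assumes p: "prime p" and j: "1 \<le> j"
  shows "norm (f (p ^ j)) \<le> sqrt (C1 * real p ^ j) * (real j * ln (real p)) powr (A / 2)"
proof -
  have "2 \<le> p ^ j" using prime_ge_2_nat[OF p] j self_le_power[of p j] by linarith
  then have "(norm (f (p ^ j)))\<^sup>2 \<le> (\<Sum>n\<in>{1..p ^ j}. (norm (f n))\<^sup>2)"
    by (intro member_le_sum) auto
  also have "\<dots> \<le> C1 * real (p ^ j) * ln (real (p ^ j)) powr A"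
    using second_moment \<open>2 \<le> p ^ j\<close> by blast
  also have "ln (real (p ^ j)) = real j * ln (real p)"
    using prime_gt_0_nat[OF p] by (simp add: ln_realpow)
  finally have "norm (f (p ^ j)) \<le> sqrt (C1 * real p ^ j * (real j * ln (real p)) powr A)"
    by (simp add: real_le_rsqrt)
  also have "\<dots> = sqrt (C1 * real p ^ j) * (real j * ln (real p)) powr (A / 2)"
    by (simp add: real_sqrt_mult powr_powr flip: powr_half_sqrt)
  finally show ?thesis .
qed

lemma sum_norm_exact_multiplicity_le:
  assumes p: "prime p"
  shows "(\<Sum>n\<in>{1..N}. if multiplicity p n = j then norm (f n) else 0)
           \<le> norm (f (p ^ j)) * (C1 * real (N div p ^ j))"
proof -
  have p0: "0 < p" using p prime_gt_0_nat by blast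
  let ?S = "{n\<in>{1..N}. multiplicity p n = j}"
  let ?M = "{m\<in>{1..N div p ^ j}. \<not> p dvd m}"
  have image: "?S \<subseteq> (\<lambda>m. p ^ j * m) ` ?M"
  proof
    fix n assume n: "n \<in> ?S"
    obtain m where m: "n = p ^ multiplicity p n * m" "\<not> p dvd m"
      by (rule multiplicity_decompose'[of n p]) (use n p not_prime_unit in auto)
    then have "n = p ^ j * m" using n by simp
    then show "n \<in> (\<lambda>m. p ^ j * m) ` ?M"
      using n m(2) p0 by (auto simp: less_eq_div_iff_mult_less_eq mult.commute intro: Suc_leI)
  qed
  have "(\<Sum>n\<in>{1..N}. if multiplicity p n = j then norm (f n) else 0) = (\<Sum>n\<in>?S. norm (f n))"
    by (rule sum.inter_filter[symmetric]) simp
  also have "\<dots> \<le> (\<Sum>n\<in>(\<lambda>m. p ^ j * m) ` ?M. norm (f n))"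
    using image by (intro sum_mono2) auto
  also have "\<dots> = (\<Sum>m\<in>?M. norm (f (p ^ j * m)))"
    using p0 by (subst sum.reindex) (auto simp: inj_on_def)
  also have "\<dots> = norm (f (p ^ j)) * (\<Sum>m\<in>?M. norm (f m))"
    unfolding sum_distrib_left
  proof (rule sum.cong[OF refl])
    fix m assume m: "m \<in> ?M"
    then have "coprime (p ^ j) m" using p prime_imp_coprime by auto
    then show "norm (f (p ^ j * m)) = norm (f (p ^ j)) * norm (f m)"
      using m p0 by (simp add: mult_coprime norm_mult)
  qed
  also have "\<dots> \<le> norm (f (p ^ j)) * (\<Sum>m\<in>{1..N div p ^ j}. norm (f m))"
    by (intro mult_left_mono sum_mono2) auto
  also have "\<dots> \<le> norm (f (p ^ j)) * (C1 * real (N div p ^ j))"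
    by (intro mult_left_mono first_moment) auto
  finally show ?thesis .
qed

end

section \<open>The decomposition of \<open>ln N\<close> times the sum\<close>

context moment_bounded_multiplicative
begin

lemma sum_coprime_prime_pairs_eq:
  "(\<Sum>(m, p)\<in>{(m, p). 1 \<le> m \<and> prime p \<and> m * p \<le> N \<and> \<not> p dvd m}.
       f m * f p * of_real (ln (real p)) * e (g (m * p)))
   = (\<Sum>n\<in>{1..N}. f n * e (g n) * of_real (\<Sum>p\<in>{p\<in>prime_factors n. multiplicity p n = 1}. ln (real p)))"
proof -
  let ?t = "\<lambda>(n, p). f n * e (g n) * of_real (ln (real p))"
  have "(\<Sum>(m, p)\<in>{(m, p). 1 \<le> m \<and> prime p \<and> m * p \<le> N \<and> \<not> p dvd m}.
           f m * f p * of_real (ln (real p)) * e (g (m * p)))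
      = (\<Sum>x\<in>{(m, p). 1 \<le> m \<and> prime p \<and> m * p \<le> N \<and> \<not> p dvd m}. ?t ((\<lambda>(m, p). (m * p, p)) x))"
  proof (rule sum.cong[OF refl])
    fix x assume "x \<in> {(m, p). 1 \<le> m \<and> prime p \<and> m * p \<le> N \<and> \<not> p dvd m}"
    then obtain m p where x: "x = (m, p)" "1 \<le> m" "prime p" "\<not> p dvd m" by auto
    then have "f (m * p) = f m * f p"
      using prime_imp_coprime[of p m] prime_gt_0_nat[of p] by (intro mult_coprime) (auto simp: coprime_commute)
    then show "(case x of (m, p) \<Rightarrow> f m * f p * of_real (ln (real p)) * e (g (m * p)))
                 = ?t ((\<lambda>(m, p). (m * p, p)) x)"
      using x by (simp add: mult_ac)
  qed
  also have "\<dots> = (\<Sum>x\<in>(SIGMA n:{1..N}. {p\<in>prime_factors n. multiplicity p n = 1}). ?t x)"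
    by (rule sum.reindex_bij_betw[OF bij_betw_coprime_prime_pairs])
  also have "\<dots> = (\<Sum>n\<in>{1..N}. \<Sum>p\<in>{p\<in>prime_factors n. multiplicity p n = 1}. f n * e (g n) * of_real (ln (real p)))"
    by (rule sum.Sigma[symmetric]) auto
  finally show ?thesis by (simp add: sum_distrib_left)
qed

lemma ln_mult_sum_eq:
  "of_real (ln (real N)) * (\<Sum>n\<in>{1..N}. f n * e (g n))
   = (\<Sum>n\<in>{1..N}. f n * e (g n) * of_real (ln (real N) - ln (real n)))
     + (\<Sum>(m, p)\<in>{(m, p). 1 \<le> m \<and> prime p \<and> m * p \<le> N \<and> \<not> p dvd m}.
          f m * f p * of_real (ln (real p)) * e (g (m * p)))
     + (\<Sum>n\<in>{1..N}. f n * e (g n) * of_real (ln_powerful_part n))"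
proof -
  let ?W = "\<lambda>n. \<Sum>p\<in>{p\<in>prime_factors n. multiplicity p n = 1}. ln (real p)"
  have "of_real (ln (real N)) * (f n * e (g n))
          = f n * e (g n) * of_real (ln (real N) - ln (real n))
            + f n * e (g n) * of_real (?W n) + f n * e (g n) * of_real (ln_powerful_part n)"
    if "n \<in> {1..N}" for n
  proof -
    have "ln (real n) = ?W n + ln_powerful_part n"
      using that ln_eq_sum_simple_primes_plus_ln_powerful_part by auto
    then have "complex_of_real (ln (real N)) = of_real (ln (real N) - ln (real n)) + of_real (?W n)
                 + of_real (ln_powerful_part n)"
      by (simp only: flip: of_real_add) (rule arg_cong[where f = of_real], linarith)
    then show ?thesis by (simp add: algebra_simps)
  qed
  then show ?thesis
    unfolding sum_coprime_prime_pairs_eq sum_distrib_left by (simp add: sum.distrib)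
qed

lemma bilinear_sum_split:
  "(\<Sum>(n, p)\<in>{(n, p). 1 \<le> n \<and> prime p \<and> n * p \<le> N}. f n * f p * of_real (ln (real p)) * e (g (n * p)))
   = (\<Sum>(m, p)\<in>{(m, p). 1 \<le> m \<and> prime p \<and> m * p \<le> N \<and> \<not> p dvd m}.
        f m * f p * of_real (ln (real p)) * e (g (m * p)))
     + (\<Sum>(m, p)\<in>{(m, p). 1 \<le> m \<and> prime p \<and> m * p \<le> N \<and> p dvd m}.
        f m * f p * of_real (ln (real p)) * e (g (m * p)))"
proof -
  have split: "{(n, p). 1 \<le> n \<and> prime p \<and> n * p \<le> N}
          = {(m, p). 1 \<le> m \<and> prime p \<and> m * p \<le> N \<and> \<not> p dvd m}
            \<union> {(m, p). 1 \<le> m \<and> prime p \<and> m * p \<le> N \<and> p dvd m}"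
    by auto
  show ?thesis
    unfolding split by (rule sum.union_disjoint[OF finite_prime_pairs_restrict finite_prime_pairs_restrict]) auto
qed

lemma ln_mult_sum_minus_bilinear_le:
  "norm (of_real (ln (real N)) * (\<Sum>n\<in>{1..N}. f n * e (g n))
      - (\<Sum>(n, p)\<in>{(n, p). 1 \<le> n \<and> prime p \<and> n * p \<le> N}. f n * f p * of_real (ln (real p)) * e (g (n * p))))
   \<le> (\<Sum>n\<in>{1..N}. norm (f n) * (ln (real N) - ln (real n)))
     + (\<Sum>n\<in>{1..N}. norm (f n) * ln_powerful_part n)
     + (\<Sum>(m, p)\<in>{(m, p). 1 \<le> m \<and> prime p \<and> m * p \<le> N \<and> p dvd m}. norm (f m) * norm (f p) * ln (real p))"
  (is "norm (?lhs - ?bilinear) \<le> ?E1 + ?E2 + ?E3")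
proof -
  let ?t = "\<lambda>(m, p). f m * f p * of_real (ln (real p)) * e (g (m * p))"
  let ?S1 = "\<Sum>n\<in>{1..N}. f n * e (g n) * of_real (ln (real N) - ln (real n))"
  let ?S2 = "\<Sum>n\<in>{1..N}. f n * e (g n) * of_real (ln_powerful_part n)"
  let ?S3 = "\<Sum>x\<in>{(m, p). 1 \<le> m \<and> prime p \<and> m * p \<le> N \<and> p dvd m}. ?t x"
  have "?lhs - ?bilinear = ?S1 + ?S2 - ?S3"
    unfolding ln_mult_sum_eq bilinear_sum_split by simp
  then have "norm (?lhs - ?bilinear) \<le> norm ?S1 + norm ?S2 + norm ?S3"
    using norm_triangle_ineq4[of "?S1 + ?S2" ?S3] norm_triangle_ineq[of ?S1 ?S2] by simp
  also have "\<dots> \<le> ?E1 + ?E2 + ?E3"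
  proof (intro add_mono order_trans[OF norm_sum sum_mono])
    fix n assume "n \<in> {1..N}"
    then have "norm (complex_of_real (ln (real N) - ln (real n))) = ln (real N) - ln (real n)"
      by (simp only: norm_of_real) simp
    then show "norm (f n * e (g n) * of_real (ln (real N) - ln (real n))) \<le> norm (f n) * (ln (real N) - ln (real n))"
      by (simp add: norm_mult)
  next
    fix n
    show "norm (f n * e (g n) * of_real (ln_powerful_part n)) \<le> norm (f n) * ln_powerful_part n"
      using ln_powerful_part_nonneg[of n] by (simp add: norm_mult)
  next
    fix x assume "x \<in> {(m, p). 1 \<le> m \<and> prime p \<and> m * p \<le> N \<and> p dvd m}"
    then show "norm (?t x) \<le> (case x of (m, p) \<Rightarrow> norm (f m) * norm (f p) * ln (real p))"
      by (auto simp: norm_mult dest: ln_prime_nonneg)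
  qed
  finally show ?thesis .
qed

end

section \<open>The pairs with \<open>p dvd m\<close>\<close>

lemma card_large_prime_divisor_pairs_le:
  assumes "1 \<le> P"
  shows "real (card {(m, p). 1 \<le> m \<and> prime p \<and> m * p \<le> N \<and> p dvd m \<and> P < p}) \<le> real N / real P"
proof -
  let ?Q = "{p. prime p \<and> P < p \<and> p \<le> N}"
  have finite_Q: "finite ?Q" by (rule finite_subset[of _ "{..N}"]) auto
  have "{(m, p). 1 \<le> m \<and> prime p \<and> m * p \<le> N \<and> p dvd m \<and> P < p}
          \<subseteq> (\<Union>p\<in>?Q. (\<lambda>k. (k * p, p)) ` {1..N div p\<^sup>2})"
  proof clarify
    fix m p assume mp: "1 \<le> m" "prime p" "m * p \<le> N" "p dvd m" "P < p"
    then obtain k where k: "m = p * k" by blast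
    have "0 < p" using mp prime_gt_0_nat by blast
    then have "1 \<le> k" "k \<le> N div p\<^sup>2" using mp k
      by (auto simp: less_eq_div_iff_mult_less_eq power2_eq_square algebra_simps intro: Suc_leI)
    moreover have "p \<le> N" using prime_pair_le mp by blast
    ultimately show "(m, p) \<in> (\<Union>p\<in>?Q. (\<lambda>k. (k * p, p)) ` {1..N div p\<^sup>2})"
      using mp k by (auto simp: mult.commute)
  qed
  then have "card {(m, p). 1 \<le> m \<and> prime p \<and> m * p \<le> N \<and> p dvd m \<and> P < p}
               \<le> card (\<Union>p\<in>?Q. (\<lambda>k. (k * p, p)) ` {1..N div p\<^sup>2})"
    by (rule card_mono[rotated]) (use finite_Q in auto)
  also have "\<dots> \<le> (\<Sum>p\<in>?Q. card ((\<lambda>k. (k * p, p)) ` {1..N div p\<^sup>2}))"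
    by (rule card_UN_le[OF finite_Q])
  also have "\<dots> \<le> (\<Sum>p\<in>?Q. N div p\<^sup>2)"
    by (intro sum_mono card_image_le[THEN order_trans]) auto
  finally have "real (card {(m, p). 1 \<le> m \<and> prime p \<and> m * p \<le> N \<and> p dvd m \<and> P < p})
                  \<le> (\<Sum>p\<in>?Q. real (N div p\<^sup>2))"
    by (simp flip: of_nat_sum)
  also have "\<dots> \<le> real N / real P" by (rule sum_large_primes_div_square_le[OF assms])
  finally show ?thesis .
qed

context moment_bounded_multiplicative
begin

lemma sum_small_prime_pairs_le:
  assumes "1 \<le> P"
  shows "(\<Sum>(m, p)\<in>{(m, p). 1 \<le> m \<and> prime p \<and> m * p \<le> N \<and> p \<le> P}. norm (f m) * ln (real p))
           \<le> C1 * real N * (ln (real P) * (1 + ln (real P)))"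
proof -
  let ?primes = "{p. prime p \<and> p \<le> P}"
  have finite_primes: "finite ?primes" by (rule finite_subset[of _ "{..P}"]) auto
  have "{(m, p). 1 \<le> m \<and> prime p \<and> m * p \<le> N \<and> p \<le> P} = prod.swap ` Sigma ?primes (\<lambda>p. {1..N div p})"
    by (auto simp: image_iff less_eq_div_iff_mult_less_eq prime_gt_0_nat)
  then have "(\<Sum>(m, p)\<in>{(m, p). 1 \<le> m \<and> prime p \<and> m * p \<le> N \<and> p \<le> P}. norm (f m) * ln (real p))
        = (\<Sum>p\<in>?primes. ln (real p) * (\<Sum>m\<in>{1..N div p}. norm (f m)))"
    using finite_primes
    by (simp add: sum.reindex sum.Sigma[symmetric] sum_distrib_left mult.commute)
  also have "\<dots> \<le> (\<Sum>p\<in>?primes. ln (real p) * (C1 * (real N / real p)))"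
  proof (intro sum_mono mult_left_mono)
    fix p assume p: "p \<in> ?primes"
    have "(\<Sum>m\<in>{1..N div p}. norm (f m)) \<le> C1 * real (N div p)" by (rule first_moment)
    also have "\<dots> \<le> C1 * (real N / real p)"
      using of_nat_div_le_of_nat[of N p] C1_pos by (intro mult_left_mono) auto
    finally show "(\<Sum>m\<in>{1..N div p}. norm (f m)) \<le> C1 * (real N / real p)" .
    show "0 \<le> ln (real p)" using p by (auto intro: ln_prime_nonneg)
  qed
  also have "\<dots> = C1 * real N * (\<Sum>p\<in>?primes. ln (real p) / real p)"
    by (simp add: sum_distrib_left field_simps)
  also have "\<dots> \<le> C1 * real N * (ln (real P) * (1 + ln (real P)))"
    using sum_primes_ln_div_le[OF assms] C1_pos by (intro mult_left_mono) auto
  finally show ?thesis .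
qed

lemma sum_squares_prime_divisor_pairs_le:
  "(\<Sum>(m, p)\<in>{(m, p). 1 \<le> m \<and> prime p \<and> m * p \<le> N \<and> p dvd m}. (norm (f m))\<^sup>2)
     \<le> 2 * ln (real N) * (C1 * real N * ln (real N) powr A)"
proof -
  have "{(m, p). 1 \<le> m \<and> prime p \<and> m * p \<le> N \<and> p dvd m} \<subseteq> Sigma {1..N} prime_factors"
  proof
    fix x assume "x \<in> {(m, p). 1 \<le> m \<and> prime p \<and> m * p \<le> N \<and> p dvd m}"
    then obtain m p where "x = (m, p)" "1 \<le> m" "prime p" "m * p \<le> N" "p dvd m" by auto
    then show "x \<in> Sigma {1..N} prime_factors"
      using prime_pair_le[of m p N] by (auto simp: in_prime_factors_iff)
  qed
  then have "(\<Sum>(m, p)\<in>{(m, p). 1 \<le> m \<and> prime p \<and> m * p \<le> N \<and> p dvd m}. (norm (f m))\<^sup>2)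
      \<le> (\<Sum>(m, p)\<in>Sigma {1..N} prime_factors. (norm (f m))\<^sup>2)"
    by (intro sum_mono2) auto
  also have "\<dots> = (\<Sum>m\<in>{1..N}. real (card (prime_factors m)) * (norm (f m))\<^sup>2)"
    by (subst sum.Sigma[symmetric]) auto
  also have "\<dots> \<le> (\<Sum>m\<in>{1..N}. 2 * ln (real N) * (norm (f m))\<^sup>2)"
  proof (intro sum_mono mult_right_mono)
    fix m assume "m \<in> {1..N}"
    then show "real (card (prime_factors m)) \<le> 2 * ln (real N)"
      using card_prime_factors_le_2_ln[of m] by (auto intro: order_trans)
  qed simp
  also have "\<dots> \<le> 2 * ln (real N) * (C1 * real N * ln (real N) powr A)"
    using second_moment_N N_ge_2 by (simp add: sum_distrib_left[symmetric])
  finally show ?thesis .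
qed

lemma sum_large_prime_divisor_pairs_le:
  assumes "1 \<le> P"
  shows "(\<Sum>(m, p)\<in>{(m, p). 1 \<le> m \<and> prime p \<and> m * p \<le> N \<and> p dvd m \<and> P < p}. norm (f m) * ln (real p))
           \<le> ln (real N) * sqrt (real N / real P * (2 * ln (real N) * (C1 * real N * ln (real N) powr A)))"
proof -
  let ?S = "{(m, p). 1 \<le> m \<and> prime p \<and> m * p \<le> N \<and> p dvd m \<and> P < p}"
  have "(\<Sum>(m, p)\<in>?S. norm (f m) * ln (real p)) \<le> (\<Sum>x\<in>?S. ln (real N) * norm (f (fst x)))"
  proof (intro sum_mono)
    fix x assume "x \<in> ?S"
    then obtain m p where "x = (m, p)" "1 \<le> m" "prime p" "m * p \<le> N" by auto
    then show "(case x of (m, p) \<Rightarrow> norm (f m) * ln (real p)) \<le> ln (real N) * norm (f (fst x))"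
      using prime_pair_le[of m p N] prime_gt_0_nat[of p] by (auto simp: mult.commute intro: mult_left_mono)
  qed
  also have "\<dots> \<le> ln (real N) * sqrt (real (card ?S) * (\<Sum>x\<in>?S. (norm (f (fst x)))\<^sup>2))"
    unfolding sum_distrib_left[symmetric]
    using N_ge_2 by (intro mult_left_mono sum_le_sqrt_card_mult_sum_squares) auto
  also have "\<dots> \<le> ln (real N) * sqrt (real N / real P * (2 * ln (real N) * (C1 * real N * ln (real N) powr A)))"
  proof (intro mult_left_mono real_sqrt_le_mono mult_mono)
    show "real (card ?S) \<le> real N / real P" by (rule card_large_prime_divisor_pairs_le[OF assms])
    have "(\<Sum>x\<in>?S. (norm (f (fst x)))\<^sup>2)
        \<le> (\<Sum>x\<in>{(m, p). 1 \<le> m \<and> prime p \<and> m * p \<le> N \<and> p dvd m}. (norm (f (fst x)))\<^sup>2)"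
      by (rule sum_mono2[OF finite_prime_pairs_restrict]) auto
    also have "\<dots> = (\<Sum>(m, p)\<in>{(m, p). 1 \<le> m \<and> prime p \<and> m * p \<le> N \<and> p dvd m}. (norm (f m))\<^sup>2)"
      by (simp add: case_prod_beta)
    also have "\<dots> \<le> 2 * ln (real N) * (C1 * real N * ln (real N) powr A)"
      by (rule sum_squares_prime_divisor_pairs_le)
    finally show "(\<Sum>x\<in>?S. (norm (f (fst x)))\<^sup>2) \<le> 2 * ln (real N) * (C1 * real N * ln (real N) powr A)" .
  qed (use N_ge_2 in \<open>auto intro: sum_nonneg\<close>)
  finally show ?thesis .
qed

lemma sum_prime_divisor_pairs_le:
  assumes "1 \<le> P"
  shows "(\<Sum>(m, p)\<in>{(m, p). 1 \<le> m \<and> prime p \<and> m * p \<le> N \<and> p dvd m}. norm (f m) * norm (f p) * ln (real p))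
    \<le> C0 * (C1 * real N * (ln (real P) * (1 + ln (real P))))
      + C0 * (ln (real N) * sqrt (real N / real P * (2 * ln (real N) * (C1 * real N * ln (real N) powr A))))"
proof -
  let ?S = "{(m, p). 1 \<le> m \<and> prime p \<and> m * p \<le> N \<and> p dvd m}"
  let ?small = "{(m, p). 1 \<le> m \<and> prime p \<and> m * p \<le> N \<and> p dvd m \<and> p \<le> P}"
  let ?large = "{(m, p). 1 \<le> m \<and> prime p \<and> m * p \<le> N \<and> p dvd m \<and> P < p}"
  have "?S = ?small \<union> ?large" by auto
  then have split: "(\<Sum>(m, p)\<in>?S. norm (f m) * ln (real p))
      = (\<Sum>(m, p)\<in>?small. norm (f m) * ln (real p)) + (\<Sum>(m, p)\<in>?large. norm (f m) * ln (real p))"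
    by (simp only:) (rule sum.union_disjoint[OF finite_prime_pairs_restrict finite_prime_pairs_restrict], auto)
  have "(\<Sum>(m, p)\<in>?small. norm (f m) * ln (real p))
          \<le> (\<Sum>(m, p)\<in>{(m, p). 1 \<le> m \<and> prime p \<and> m * p \<le> N \<and> p \<le> P}. norm (f m) * ln (real p))"
    by (rule sum_mono2[OF finite_prime_pairs_restrict]) (auto intro!: mult_nonneg_nonneg ln_prime_nonneg)
  also have "\<dots> \<le> C1 * real N * (ln (real P) * (1 + ln (real P)))"
    by (rule sum_small_prime_pairs_le[OF assms])
  finally have small: "(\<Sum>(m, p)\<in>?small. norm (f m) * ln (real p)) \<le> \<dots>" .
  have "(\<Sum>(m, p)\<in>?S. norm (f m) * norm (f p) * ln (real p)) \<le> (\<Sum>(m, p)\<in>?S. C0 * (norm (f m) * ln (real p)))"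
  proof (intro sum_mono, clarify)
    fix m p :: nat assume "prime p"
    then have "norm (f m) * ln (real p) * norm (f p) \<le> norm (f m) * ln (real p) * C0"
      by (intro mult_left_mono norm_prime_le mult_nonneg_nonneg ln_prime_nonneg) auto
    then show "norm (f m) * norm (f p) * ln (real p) \<le> C0 * (norm (f m) * ln (real p))"
      by (simp add: mult_ac)
  qed
  also have "\<dots> = C0 * (\<Sum>(m, p)\<in>?S. norm (f m) * ln (real p))"
    by (simp add: sum_distrib_left case_prod_beta)
  also have "\<dots> \<le> C0 * (C1 * real N * (ln (real P) * (1 + ln (real P)))
      + ln (real N) * sqrt (real N / real P * (2 * ln (real N) * (C1 * real N * ln (real N) powr A))))"
    unfolding split
    using small sum_large_prime_divisor_pairs_le[OF assms] C0_nonneg by (intro mult_left_mono add_mono) auto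
  finally show ?thesis by (simp add: distrib_left)
qed

end

section \<open>The powerful-part term\<close>

lemma card_exceptional_le:
  assumes "1 \<le> P"
  shows "real (card {n\<in>{1..N}. (\<exists>p. prime p \<and> P < p \<and> p\<^sup>2 dvd n) \<or> (\<exists>p. prime p \<and> p \<le> P \<and> p ^ J dvd n)})
           \<le> real N / real P + real P * real N / 2 ^ J"
proof -
  let ?Q = "{p. prime p \<and> P < p \<and> p \<le> N}" and ?primes = "{p. prime p \<and> p \<le> P}"
  have finite_Q: "finite ?Q" by (rule finite_subset[of _ "{..N}"]) auto
  have finite_primes: "finite ?primes" by (rule finite_subset[of _ "{..P}"]) auto
  have "{n\<in>{1..N}. (\<exists>p. prime p \<and> P < p \<and> p\<^sup>2 dvd n) \<or> (\<exists>p. prime p \<and> p \<le> P \<and> p ^ J dvd n)}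
          \<subseteq> (\<Union>p\<in>?Q. {n\<in>{1..N}. p\<^sup>2 dvd n}) \<union> (\<Union>p\<in>?primes. {n\<in>{1..N}. p ^ J dvd n})"
  proof
    fix n assume "n \<in> {n\<in>{1..N}. (\<exists>p. prime p \<and> P < p \<and> p\<^sup>2 dvd n) \<or> (\<exists>p. prime p \<and> p \<le> P \<and> p ^ J dvd n)}"
    then have n: "n \<in> {1..N}"
      and "(\<exists>p. prime p \<and> P < p \<and> p\<^sup>2 dvd n) \<or> (\<exists>p. prime p \<and> p \<le> P \<and> p ^ J dvd n)" by auto
    then consider p where "prime p" "P < p" "p\<^sup>2 dvd n" | p where "prime p" "p \<le> P" "p ^ J dvd n" by blast
    then show "n \<in> (\<Union>p\<in>?Q. {n\<in>{1..N}. p\<^sup>2 dvd n}) \<union> (\<Union>p\<in>?primes. {n\<in>{1..N}. p ^ J dvd n})"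
    proof cases
      case (1 p)
      have "p \<le> p\<^sup>2" by (simp add: power2_eq_square)
      also have "p\<^sup>2 \<le> n" using 1 n by (intro dvd_imp_le) auto
      finally show ?thesis using 1 n by auto
    qed (use n in auto)
  qed
  then have "card {n\<in>{1..N}. (\<exists>p. prime p \<and> P < p \<and> p\<^sup>2 dvd n) \<or> (\<exists>p. prime p \<and> p \<le> P \<and> p ^ J dvd n)}
      \<le> card (\<Union>p\<in>?Q. {n\<in>{1..N}. p\<^sup>2 dvd n}) + card (\<Union>p\<in>?primes. {n\<in>{1..N}. p ^ J dvd n})"
    by (rule card_mono[rotated, THEN order_trans]) (auto intro: card_Un_le)
  also have "\<dots> \<le> (\<Sum>p\<in>?Q. N div p\<^sup>2) + (\<Sum>p\<in>?primes. N div p ^ J)"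
    by (intro add_mono card_UN_le[OF finite_Q, THEN order_trans] card_UN_le[OF finite_primes, THEN order_trans]
              sum_mono card_multiples_le) (auto dest: prime_gt_0_nat)
  finally have "real (card {n\<in>{1..N}. (\<exists>p. prime p \<and> P < p \<and> p\<^sup>2 dvd n) \<or> (\<exists>p. prime p \<and> p \<le> P \<and> p ^ J dvd n)})
      \<le> (\<Sum>p\<in>?Q. real (N div p\<^sup>2)) + (\<Sum>p\<in>?primes. real (N div p ^ J))"
    by (simp flip: of_nat_sum of_nat_add)
  also have "\<dots> \<le> real N / real P + real P * real N / 2 ^ J"
    using sum_large_primes_div_square_le[OF assms] sum_small_primes_div_power_le by (rule add_mono)
  finally show ?thesis .
qed

context moment_bounded_multiplicative
begin

text \<open>For \<open>j \<ge> 2\<close> the factor \<open>\<surd>(p\<^sup>j)\<close> from the second moment is beaten by the density \<open>1/p\<^sup>j\<close>.\<close>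
lemma sum_norm_exact_multiplicity_ge_2_le:
  assumes p: "prime p" and j: "2 \<le> j"
  shows "(\<Sum>n\<in>{1..N}. if multiplicity p n = j then norm (f n) else 0)
           \<le> sqrt C1 * C1 * (real j * ln (real p)) powr (A / 2) * real N / real p"
proof -
  have p2: "2 \<le> real p" using prime_ge_2_nat[OF p] by simp
  have "real p \<le> sqrt (real p ^ j)"
    using real_sqrt_le_mono[of "real p ^ 2" "real p ^ j"] power_increasing[OF j, of "real p"] p2 by simp
  then have "1 / sqrt (real p ^ j) \<le> 1 / real p" using p2 by (intro divide_left_mono) auto
  moreover have "sqrt (real p ^ j) / real p ^ j = 1 / sqrt (real p ^ j)"
    using p2 by (simp add: field_simps)
  ultimately have sqrt_le: "sqrt (real p ^ j) / real p ^ j \<le> 1 / real p" by simp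
  have "(\<Sum>n\<in>{1..N}. if multiplicity p n = j then norm (f n) else 0) \<le> norm (f (p ^ j)) * (C1 * real (N div p ^ j))"
    by (rule sum_norm_exact_multiplicity_le[OF p])
  also have "\<dots> \<le> (sqrt C1 * sqrt (real p ^ j) * (real j * ln (real p)) powr (A / 2)) * (C1 * (real N / real p ^ j))"
    using norm_prime_power_le[OF p, of j] j of_nat_div_le_of_nat[of N "p ^ j"] C1_pos
    by (intro mult_mono) (auto simp: real_sqrt_mult)
  also have "\<dots> = sqrt C1 * C1 * (real j * ln (real p)) powr (A / 2) * real N * (sqrt (real p ^ j) / real p ^ j)"
    by (simp add: field_simps)
  also have "\<dots> \<le> sqrt C1 * C1 * (real j * ln (real p)) powr (A / 2) * real N * (1 / real p)"
    using sqrt_le C1_pos by (intro mult_left_mono) auto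
  finally show ?thesis by simp
qed

lemma sum_norm_multiplicity_ln_small_prime_le:
  assumes p: "prime p" "p \<le> P"
  shows "(\<Sum>n\<in>{1..N}. norm (f n) *
            (if 2 \<le> multiplicity p n \<and> multiplicity p n < J then real (multiplicity p n) * ln (real p) else 0))
    \<le> real J * real J * (sqrt C1 * C1 * (real J * ln (real P)) powr (A / 2)) * real N * (ln (real p) / real p)"
proof -
  let ?K = "sqrt C1 * C1 * (real J * ln (real P)) powr (A / 2)"
  have lp: "0 \<le> ln (real p)" using ln_prime_nonneg[OF p(1)] .
  have "(\<Sum>n\<in>{1..N}. norm (f n) *
            (if 2 \<le> multiplicity p n \<and> multiplicity p n < J then real (multiplicity p n) * ln (real p) else 0))
     = (\<Sum>j\<in>{2..<J}. real j * ln (real p) * (\<Sum>n\<in>{1..N}. if multiplicity p n = j then norm (f n) else 0))"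
  proof -
    have "(\<Sum>n\<in>{1..N}. norm (f n) *
            (if 2 \<le> multiplicity p n \<and> multiplicity p n < J then real (multiplicity p n) * ln (real p) else 0))
       = (\<Sum>n\<in>{1..N}. \<Sum>j\<in>{2..<J}. if multiplicity p n = j then real j * ln (real p) * norm (f n) else 0)"
      by (rule sum.cong[OF refl], subst sum.delta') auto
    also have "\<dots> = (\<Sum>j\<in>{2..<J}. \<Sum>n\<in>{1..N}. if multiplicity p n = j then real j * ln (real p) * norm (f n) else 0)"
      by (rule sum.swap)
    also have "\<dots> = (\<Sum>j\<in>{2..<J}. real j * ln (real p) * (\<Sum>n\<in>{1..N}. if multiplicity p n = j then norm (f n) else 0))"
      unfolding sum_distrib_left by (intro sum.cong refl) simp
    finally show ?thesis .
  qed
  also have "\<dots> \<le> (\<Sum>j\<in>{2..<J}. real J * ln (real p) * (?K * real N / real p))"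
  proof (intro sum_mono mult_mono)
    fix j assume j: "j \<in> {2..<J}"
    have "real j * ln (real p) \<le> real J * ln (real P)"
      using j lp p by (intro mult_mono) (auto dest: prime_gt_0_nat)
    then have "(real j * ln (real p)) powr (A / 2) \<le> (real J * ln (real P)) powr (A / 2)"
      using lp A_nonneg by (intro powr_mono2) auto
    then have "sqrt C1 * C1 * (real j * ln (real p)) powr (A / 2) * real N / real p \<le> ?K * real N / real p"
      using C1_pos by (intro divide_right_mono mult_right_mono mult_left_mono) auto
    then show "(\<Sum>n\<in>{1..N}. if multiplicity p n = j then norm (f n) else 0) \<le> ?K * real N / real p"
      using sum_norm_exact_multiplicity_ge_2_le[OF p(1), of j] j by simp
  qed (use lp in \<open>auto intro: sum_nonneg\<close>)
  also have "\<dots> = real (J - 2) * (real J * ln (real p) * (?K * real N / real p))" by simp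
  also have "\<dots> \<le> real J * (real J * ln (real p) * (?K * real N / real p))"
    using lp C1_pos by (intro mult_right_mono) auto
  finally show ?thesis by (simp add: field_simps)
qed

lemma sum_norm_mult_truncated_ln_powerful_part_le:
  assumes "1 \<le> P"
  shows "(\<Sum>n\<in>{1..N}. norm (f n) * (\<Sum>p\<in>{p. prime p \<and> p \<le> P}.
            if 2 \<le> multiplicity p n \<and> multiplicity p n < J then real (multiplicity p n) * ln (real p) else 0))
    \<le> real J * real J * (sqrt C1 * C1 * (real J * ln (real P)) powr (A / 2)) * real N * (ln (real P) * (1 + ln (real P)))"
proof -
  let ?K = "sqrt C1 * C1 * (real J * ln (real P)) powr (A / 2)"
  let ?primes = "{p. prime p \<and> p \<le> P}"
  have "(\<Sum>n\<in>{1..N}. norm (f n) * (\<Sum>p\<in>?primes.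
            if 2 \<le> multiplicity p n \<and> multiplicity p n < J then real (multiplicity p n) * ln (real p) else 0))
      = (\<Sum>p\<in>?primes. \<Sum>n\<in>{1..N}. norm (f n) *
            (if 2 \<le> multiplicity p n \<and> multiplicity p n < J then real (multiplicity p n) * ln (real p) else 0))"
    unfolding sum_distrib_left by (rule sum.swap)
  also have "\<dots> \<le> (\<Sum>p\<in>?primes. real J * real J * ?K * real N * (ln (real p) / real p))"
    by (intro sum_mono sum_norm_multiplicity_ln_small_prime_le) auto
  also have "\<dots> \<le> real J * real J * ?K * real N * (ln (real P) * (1 + ln (real P)))"
    unfolding sum_distrib_left[symmetric]
    using sum_primes_ln_div_le[OF assms] C1_pos by (intro mult_left_mono) auto
  finally show ?thesis .
qed

lemma sum_norm_subset_le:
  assumes "B \<subseteq> {1..N}"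
  shows "(\<Sum>n\<in>B. norm (f n)) \<le> sqrt (real (card B) * (C1 * real N * ln (real N) powr A))"
proof -
  have "(\<Sum>n\<in>B. norm (f n)) \<le> sqrt (real (card B) * (\<Sum>n\<in>B. (norm (f n))\<^sup>2))"
    by (rule sum_le_sqrt_card_mult_sum_squares)
  also have "\<dots> \<le> sqrt (real (card B) * (C1 * real N * ln (real N) powr A))"
    using sum_mono2[OF _ assms, of "\<lambda>n. (norm (f n))\<^sup>2"] second_moment_N
    by (intro real_sqrt_le_mono mult_left_mono) auto
  finally show ?thesis .
qed

lemma sum_norm_mult_ln_powerful_part_le:
  assumes "1 \<le> P"
  shows "(\<Sum>n\<in>{1..N}. norm (f n) * ln_powerful_part n)
    \<le> real J * real J * (sqrt C1 * C1 * (real J * ln (real P)) powr (A / 2)) * real N * (ln (real P) * (1 + ln (real P)))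
      + ln (real N) * sqrt ((real N / real P + real P * real N / 2 ^ J) * (C1 * real N * ln (real N) powr A))"
proof -
  define trunc where "trunc n = (\<Sum>p\<in>{p. prime p \<and> p \<le> P}.
    if 2 \<le> multiplicity p n \<and> multiplicity p n < J then real (multiplicity p n) * ln (real p) else 0)" for n
  define B where "B = {n\<in>{1..N}. (\<exists>p. prime p \<and> P < p \<and> p\<^sup>2 dvd n) \<or> (\<exists>p. prime p \<and> p \<le> P \<and> p ^ J dvd n)}"
  have B_subset: "B \<subseteq> {1..N}" unfolding B_def by auto
  have "norm (f n) * ln_powerful_part n \<le> norm (f n) * trunc n + (if n \<in> B then ln (real N) * norm (f n) else 0)"
    if n: "n \<in> {1..N}" for n
  proof -
    have "ln_powerful_part n \<le> trunc n + (if n \<in> B then ln (real n) else 0)"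
      using ln_powerful_part_le_truncated[where P = P and J = J, of n] n unfolding trunc_def B_def by simp
    also have "\<dots> \<le> trunc n + (if n \<in> B then ln (real N) else 0)" using n by auto
    finally have "norm (f n) * ln_powerful_part n \<le> norm (f n) * (trunc n + (if n \<in> B then ln (real N) else 0))"
      by (rule mult_left_mono) simp
    then show ?thesis by (cases "n \<in> B") (simp_all add: algebra_simps)
  qed
  then have "(\<Sum>n\<in>{1..N}. norm (f n) * ln_powerful_part n)
      \<le> (\<Sum>n\<in>{1..N}. norm (f n) * trunc n + (if n \<in> B then ln (real N) * norm (f n) else 0))"
    by (rule sum_mono)
  also have "\<dots> = (\<Sum>n\<in>{1..N}. norm (f n) * trunc n) + ln (real N) * (\<Sum>n\<in>B. norm (f n))"
    using B_subset by (simp add: sum.distrib sum.inter_restrict[symmetric] Int_absorb1 sum_distrib_left)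
  also have "\<dots> \<le> real J * real J * (sqrt C1 * C1 * (real J * ln (real P)) powr (A / 2)) * real N
                    * (ln (real P) * (1 + ln (real P)))
      + ln (real N) * sqrt ((real N / real P + real P * real N / 2 ^ J) * (C1 * real N * ln (real N) powr A))"
  proof (rule add_mono)
    show "(\<Sum>n\<in>{1..N}. norm (f n) * trunc n)
            \<le> real J * real J * (sqrt C1 * C1 * (real J * ln (real P)) powr (A / 2)) * real N
                * (ln (real P) * (1 + ln (real P)))"
      unfolding trunc_def by (rule sum_norm_mult_truncated_ln_powerful_part_le[OF assms])
    have "(\<Sum>n\<in>B. norm (f n)) \<le> sqrt (real (card B) * (C1 * real N * ln (real N) powr A))"
      by (rule sum_norm_subset_le[OF B_subset])
    also have "\<dots> \<le> sqrt ((real N / real P + real P * real N / 2 ^ J) * (C1 * real N * ln (real N) powr A))"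
      unfolding B_def using card_exceptional_le[OF assms] C1_pos by (intro real_sqrt_le_mono mult_right_mono) auto
    finally show "ln (real N) * (\<Sum>n\<in>B. norm (f n))
        \<le> ln (real N) * sqrt ((real N / real P + real P * real N / 2 ^ J) * (C1 * real N * ln (real N) powr A))"
      by (rule mult_left_mono) (use N_ge_2 in simp)
  qed
  finally show ?thesis .
qed

end

section \<open>Choice of the parameters\<close>

lemma one_le_ln: "4 \<le> (M::real) \<Longrightarrow> 1 \<le> ln M"
proof -
  assume "4 \<le> M"
  have "ln (4::real) = 2 * ln 2" using ln_realpow[of 2 2] by simp
  then have "1 \<le> ln (4::real)" using ln2_ge_two_thirds by linarith
  also have "\<dots> \<le> ln M" using \<open>4 \<le> M\<close> by simp
  finally show ?thesis .
qed

lemma real_nat_ceiling_le: "0 \<le> (x::real) \<Longrightarrow> real (nat \<lceil>x\<rceil>) \<le> x + 1"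
  by linarith

lemma choice_of_P:
  fixes M A :: real and P :: nat
  assumes M: "4 \<le> M" and A: "0 \<le> A" and P: "P = nat \<lceil>M powr (A + 3)\<rceil>"
  shows "M powr (A + 3) \<le> real P" "real P \<le> 2 * M powr (A + 3)" "1 \<le> P" "ln (real P) \<le> (A + 4) * ln M"
proof -
  have y: "1 \<le> M powr (A + 3)" using M A by (intro ge_one_powr_ge_zero) auto
  show P_ge: "M powr (A + 3) \<le> real P" unfolding P by (rule real_nat_ceiling_ge)
  have "real P \<le> M powr (A + 3) + 1" unfolding P using y by (intro real_nat_ceiling_le) linarith
  then show P_le: "real P \<le> 2 * M powr (A + 3)" using y by linarith
  show "1 \<le> P" using P_ge y by linarith
  have "ln (real P) \<le> ln (2 * M powr (A + 3))" using P_le P_ge y by (subst ln_le_cancel_iff) auto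
  also have "\<dots> = ln 2 + (A + 3) * ln M" using M by (simp add: ln_mult ln_powr)
  also have "\<dots> \<le> (A + 4) * ln M" using one_le_ln[OF M] ln_2_less_1 by (simp add: algebra_simps)
  finally show "ln (real P) \<le> (A + 4) * ln M" .
qed

lemma choice_of_J:
  fixes M A :: real and J :: nat
  assumes M: "4 \<le> M" and A: "0 \<le> A" and J: "J = nat \<lceil>3 * (A + 3) * log 2 M\<rceil>"
  shows "1 \<le> J" "real J \<le> (5 * (A + 3) + 1) * ln M" "M powr (3 * (A + 3)) \<le> 2 ^ J"
proof -
  let ?x = "3 * (A + 3) * log 2 M"
  have lM: "1 \<le> ln M" using one_le_ln[OF M] .
  have log2: "log 2 M \<le> ln M * (3 / 2)"
    using ln2_ge_two_thirds lM by (simp add: log_def divide_simps mult.commute mult_left_mono)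
  have x: "0 < ?x" using lM A by (simp add: log_def)
  have J_ge: "?x \<le> real J" unfolding J by (rule real_nat_ceiling_ge)
  then show "1 \<le> J" using x by (cases J) auto
  have "?x \<le> 3 * (A + 3) * (ln M * (3 / 2))" using log2 A by (intro mult_left_mono) auto
  then have "real J \<le> (9 / 2) * (A * ln M) + (27 / 2) * ln M + 1"
    using real_nat_ceiling_le[of ?x] x J by (simp add: algebra_simps)
  moreover have "0 \<le> A * ln M" using A lM by simp
  ultimately show "real J \<le> (5 * (A + 3) + 1) * ln M" using lM by (simp add: algebra_simps)
  have "M powr (3 * (A + 3)) = (2 powr log 2 M) powr (3 * (A + 3))" using M by simp
  also have "\<dots> = 2 powr ?x" by (simp add: powr_powr mult_ac)
  also have "\<dots> \<le> 2 ^ J" using J_ge by (simp add: powr_realpow flip: powr_realpow)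
  finally show "M powr (3 * (A + 3)) \<le> 2 ^ J" .
qed

lemma powr_le_powr_of_le:
  fixes L M a b :: real
  assumes "0 \<le> L" "L \<le> M" "1 \<le> M" "0 \<le> a" "a \<le> b"
  shows "L powr a \<le> M powr b"
  using powr_mono2[of a L M] powr_mono[of a b M] assms by linarith

lemma mult_sqrt_le_of_square_le:
  fixes L X c r :: real
  assumes "0 \<le> L" "0 \<le> X" "0 \<le> c" "0 \<le> r" "L\<^sup>2 * X \<le> c * r\<^sup>2"
  shows "L * sqrt X \<le> r * sqrt c"
proof -
  have "L * sqrt X = sqrt (L\<^sup>2 * X)" using assms by (simp add: real_sqrt_mult)
  also have "\<dots> \<le> sqrt (c * r\<^sup>2)" using assms by (intro real_sqrt_le_mono)
  also have "\<dots> = r * sqrt c" using assms by (simp add: real_sqrt_mult)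
  finally show ?thesis .
qed

lemma large_prime_term_le:
  fixes L P r C1 A :: real
  assumes L: "0 < L" and r: "0 \<le> r" and C1: "0 < C1" and P: "L powr (A + 3) \<le> P"
  shows "L * sqrt (r / P * (2 * L * (C1 * r * L powr A))) \<le> r * sqrt (2 * C1)"
proof (rule mult_sqrt_le_of_square_le)
  have P_pos: "0 < P" using P L by (smt (verit) powr_gt_zero)
  have "L powr (A + 3) = L powr A * L ^ 3" using L by (simp add: powr_add powr_realpow)
  then have "L\<^sup>2 * (r / P * (2 * L * (C1 * r * L powr A))) = (2 * C1) * r\<^sup>2 * (L powr (A + 3) / P)"
    by (simp add: power2_eq_square power3_eq_cube field_simps)
  also have "\<dots> \<le> (2 * C1) * r\<^sup>2 * 1"
    using P P_pos C1 by (intro mult_left_mono) auto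
  finally show "L\<^sup>2 * (r / P * (2 * L * (C1 * r * L powr A))) \<le> 2 * C1 * r\<^sup>2" by simp
  show "0 \<le> r / P * (2 * L * (C1 * r * L powr A))" using L r C1 P_pos by simp
qed (use L C1 r in auto)

lemma exceptional_term_le:
  fixes L y P r C1 A :: real and J :: nat
  assumes L: "0 < L" and r: "0 \<le> r" and C1: "0 < C1" and y: "2 \<le> y" "L powr (A + 2) \<le> y"
    and P: "y \<le> P" "P \<le> 2 * y" and J: "y ^ 3 \<le> 2 ^ J"
  shows "L * sqrt ((r / P + P * r / 2 ^ J) * (C1 * r * L powr A)) \<le> r * sqrt (2 * C1)"
proof (rule mult_sqrt_le_of_square_le)
  have "1 / P \<le> 1 / y" using y P by (intro divide_left_mono) auto
  moreover have "P / 2 ^ J \<le> 1 / y"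
  proof -
    have "P / 2 ^ J \<le> 2 * y / y ^ 3" using P J y by (intro frac_le) auto
    also have "\<dots> \<le> 1 / y" using y by (simp add: field_simps power3_eq_cube)
    finally show ?thesis .
  qed
  ultimately have "L powr (A + 2) * (1 / P + P / 2 ^ J) \<le> y * (2 / y)"
    using y P by (intro mult_mono) auto
  then have "L powr (A + 2) * (1 / P + P / 2 ^ J) \<le> 2" using y by simp
  moreover have "L powr (A + 2) = L powr A * L\<^sup>2" using L by (simp add: powr_add powr_realpow)
  ultimately have "C1 * r\<^sup>2 * (L powr A * L\<^sup>2 * (1 / P + P / 2 ^ J)) \<le> C1 * r\<^sup>2 * 2"
    using C1 by (intro mult_left_mono) auto
  then show "L\<^sup>2 * ((r / P + P * r / 2 ^ J) * (C1 * r * L powr A)) \<le> 2 * C1 * r\<^sup>2"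
    by (simp add: field_simps power2_eq_square)
  show "0 \<le> (r / P + P * r / 2 ^ J) * (C1 * r * L powr A)" using r C1 y P by simp
qed (use L C1 r in auto)

lemma mult_one_plus_le:
  fixes x b l :: real
  assumes "0 \<le> x" "x \<le> b * l" "1 \<le> l"
  shows "x * (1 + x) \<le> b * (b + 1) * l\<^sup>2"
proof -
  have "x * (1 + x) \<le> (b * l) * (l + b * l)" using assms by (intro mult_mono add_mono) auto
  then show ?thesis by (simp add: power2_eq_square algebra_simps)
qed

lemma small_prime_term_le:
  fixes l lP r C1 A :: real and J :: nat
  assumes l: "1 \<le> l" and lP: "0 \<le> lP" "lP \<le> (A + 4) * l" and J: "real J \<le> (5 * (A + 3) + 1) * l"
    and A: "0 \<le> A" and C1: "0 < C1" and r: "0 \<le> r"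
  shows "real J * real J * (sqrt C1 * C1 * (real J * lP) powr (A / 2)) * r * (lP * (1 + lP))
           \<le> (5 * (A + 3) + 1)\<^sup>2 * (sqrt C1 * C1 * ((5 * (A + 3) + 1) * (A + 4)) powr (A / 2)) * ((A + 4) * (A + 5))
             * r * l powr (A + 4)"
proof -
  define c where "c = (5 * (A + 3) + 1) * (A + 4)"
  have c: "0 \<le> c" using A unfolding c_def by simp
  have l2: "l\<^sup>2 = l powr 2" using l by (simp add: powr_realpow)
  have "real J * lP \<le> c * l\<^sup>2"
    using mult_mono[OF J lP(2)] A l lP unfolding c_def by (simp add: power2_eq_square mult_ac)
  then have "(real J * lP) powr (A / 2) \<le> (c * l\<^sup>2) powr (A / 2)" using lP A by (intro powr_mono2) auto
  also have "\<dots> = c powr (A / 2) * (l powr 2) powr (A / 2)"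
    using c l unfolding l2 by (simp add: powr_mult)
  also have "(l powr 2) powr (A / 2) = l powr A" by (subst powr_powr) simp
  finally have Jl: "(real J * lP) powr (A / 2) \<le> c powr (A / 2) * l powr A" .
  have JJ: "real J * real J \<le> (5 * (A + 3) + 1)\<^sup>2 * l\<^sup>2"
    using mult_mono[OF J J] A l by (simp add: power2_eq_square mult_ac)
  have "sqrt C1 * C1 * (real J * lP) powr (A / 2) \<le> sqrt C1 * C1 * (c powr (A / 2) * l powr A)"
    by (rule mult_left_mono[OF Jl]) (use C1 in auto)
  then have "real J * real J * (sqrt C1 * C1 * (real J * lP) powr (A / 2))
               \<le> ((5 * (A + 3) + 1)\<^sup>2 * l\<^sup>2) * (sqrt C1 * C1 * (c powr (A / 2) * l powr A))"
    by (rule mult_mono[OF JJ]) (use C1 in auto)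
  then have "real J * real J * (sqrt C1 * C1 * (real J * lP) powr (A / 2)) * r
               \<le> ((5 * (A + 3) + 1)\<^sup>2 * l\<^sup>2) * (sqrt C1 * C1 * (c powr (A / 2) * l powr A)) * r"
    by (rule mult_right_mono[OF _ r])
  then have "real J * real J * (sqrt C1 * C1 * (real J * lP) powr (A / 2)) * r * (lP * (1 + lP))
        \<le> ((5 * (A + 3) + 1)\<^sup>2 * l\<^sup>2) * (sqrt C1 * C1 * (c powr (A / 2) * l powr A)) * r * ((A + 4) * (A + 4 + 1) * l\<^sup>2)"
    by (rule mult_mono[OF _ mult_one_plus_le[OF lP(1,2) l]]) (use C1 r lP c l in \<open>auto intro!: mult_nonneg_nonneg\<close>)
  also have "\<dots> = (5 * (A + 3) + 1)\<^sup>2 * (sqrt C1 * C1 * c powr (A / 2)) * ((A + 4) * (A + 5)) * r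
                    * (l\<^sup>2 * l\<^sup>2 * l powr A)"
    by (simp add: mult_ac add.assoc)
  also have "l\<^sup>2 * l\<^sup>2 * l powr A = l powr (A + 4)"
    unfolding l2 by (simp add: powr_add[symmetric] add_ac)
  finally show ?thesis unfolding c_def .
qed

text \<open>With \<open>L = ln N\<close> this is \<open>(ln ln N)\<^sup>A\<^sup>+\<^sup>4 \<ll>\<^sub>\<epsilon> (ln N)\<^sup>\<epsilon>\<close>.\<close>
lemma ln_powr_le_powr:
  fixes A \<epsilon> L :: real
  assumes A: "0 \<le> A" and \<epsilon>: "0 < \<epsilon>" and L: "2/3 \<le> L"
  shows "ln (L + 4) powr (A + 4) \<le> ((A + 4) / \<epsilon>) powr (A + 4) * 7 powr \<epsilon> * L powr \<epsilon>"
proof -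
  define d where "d = \<epsilon> / (A + 4)"
  have d: "0 < d" using \<epsilon> A unfolding d_def by simp
  have "ln (L + 4) \<le> (L + 4) powr d / d" using L d by (intro ln_powr_bound) auto
  then have "ln (L + 4) powr (A + 4) \<le> ((L + 4) powr d / d) powr (A + 4)" using L A by (intro powr_mono2) auto
  also have "\<dots> = (L + 4) powr (d * (A + 4)) / d powr (A + 4)" using L d by (simp add: powr_divide powr_powr)
  also have "d * (A + 4) = \<epsilon>" unfolding d_def using A by simp
  also have "(L + 4) powr \<epsilon> / d powr (A + 4) = ((A + 4) / \<epsilon>) powr (A + 4) * (L + 4) powr \<epsilon>"
    using d \<epsilon> A unfolding d_def by (simp add: powr_divide field_simps)
  also have "(L + 4) powr \<epsilon> \<le> 7 powr \<epsilon> * L powr \<epsilon>"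
    using L \<epsilon> powr_mono2[of \<epsilon> "L + 4" "7 * L"] by (simp add: powr_mult)
  finally show ?thesis using A \<epsilon> by (simp add: mult_left_mono mult_ac)
qed

definition error_coefficient :: "real \<Rightarrow> real \<Rightarrow> real \<Rightarrow> real" where
  "error_coefficient A C0 C1 = C1 + C0 * sqrt (2 * C1) + sqrt (2 * C1) + C0 * C1 * ((A + 4) * (A + 5))
     + (5 * (A + 3) + 1)\<^sup>2 * (sqrt C1 * C1 * ((5 * (A + 3) + 1) * (A + 4)) powr (A / 2)) * ((A + 4) * (A + 5))"

lemma error_coefficient_nonneg: "0 \<le> A \<Longrightarrow> 0 \<le> C0 \<Longrightarrow> 0 \<le> C1 \<Longrightarrow> 0 \<le> error_coefficient A C0 C1"
  unfolding error_coefficient_def by (intro add_nonneg_nonneg mult_nonneg_nonneg) auto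

text \<open>Here \<open>L\<close> stands for \<open>ln N\<close> and \<open>r\<close> for \<open>N\<close>.\<close>
lemma error_terms_le:
  fixes A C0 C1 L r :: real and P J :: nat
  assumes A: "0 \<le> A" and C0: "0 \<le> C0" and C1: "0 < C1" and L: "2/3 \<le> L" and r: "0 \<le> r"
    and P: "P = nat \<lceil>(L + 4) powr (A + 3)\<rceil>" and J: "J = nat \<lceil>3 * (A + 3) * log 2 (L + 4)\<rceil>"
  shows "C1 * r
     + (real J * real J * (sqrt C1 * C1 * (real J * ln (real P)) powr (A / 2)) * r * (ln (real P) * (1 + ln (real P)))
        + L * sqrt ((r / real P + real P * r / 2 ^ J) * (C1 * r * L powr A)))
     + (C0 * (C1 * r * (ln (real P) * (1 + ln (real P))))
        + C0 * (L * sqrt (r / real P * (2 * L * (C1 * r * L powr A)))))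
     \<le> error_coefficient A C0 C1 * r * ln (L + 4) powr (A + 4)"
proof -
  define M where "M = L + 4"
  define \<Lambda> where "\<Lambda> = ln M powr (A + 4)"
  have M: "4 \<le> M" and L0: "0 < L" and LM: "L \<le> M" using L unfolding M_def by auto
  have l: "1 \<le> ln M" by (rule one_le_ln[OF M])
  note P_bounds = choice_of_P[OF M A P[folded M_def]] and J_bounds = choice_of_J[OF M A J[folded M_def]]
  have lP: "0 \<le> ln (real P)" using P_bounds(3) by simp
  have \<Lambda>1: "1 \<le> \<Lambda>" unfolding \<Lambda>_def using l A by (intro ge_one_powr_ge_zero) auto
  have y: "L powr (A + 2) \<le> M powr (A + 3)" "L powr (A + 3) \<le> M powr (A + 3)" "2 \<le> M powr (A + 3)"
    using powr_le_powr_of_le[of L M] powr_le_powr_of_le[of M M 1 "A + 3"] L0 LM M A by auto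
  have "(M powr (A + 3)) ^ 3 = M powr (3 * (A + 3))" using M by (simp add: power3_eq_cube flip: powr_add)
  then have y3: "(M powr (A + 3)) ^ 3 \<le> 2 ^ J" using J_bounds(3) by simp
  have scale: "c \<le> c * \<Lambda>" if "0 \<le> c" for c using mult_left_mono[OF \<Lambda>1 that] by simp
  have "C1 * r \<le> C1 * r * \<Lambda>" using C1 r by (intro scale) simp
  moreover have "real J * real J * (sqrt C1 * C1 * (real J * ln (real P)) powr (A / 2)) * r * (ln (real P) * (1 + ln (real P)))
      \<le> (5 * (A + 3) + 1)\<^sup>2 * (sqrt C1 * C1 * ((5 * (A + 3) + 1) * (A + 4)) powr (A / 2)) * ((A + 4) * (A + 5)) * r * \<Lambda>"
    unfolding \<Lambda>_def using small_prime_term_le[OF l lP P_bounds(4) J_bounds(2) A C1 r] .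
  moreover have "L * sqrt ((r / real P + real P * r / 2 ^ J) * (C1 * r * L powr A)) \<le> r * sqrt (2 * C1) * \<Lambda>"
    by (rule order_trans[OF exceptional_term_le[OF L0 r C1 y(3) y(1) P_bounds(1,2) y3] scale]) (use C1 r in simp)
  moreover have "C0 * (C1 * r * (ln (real P) * (1 + ln (real P)))) \<le> C0 * (C1 * r * ((A + 4) * (A + 5) * \<Lambda>))"
  proof -
    have "(ln M)\<^sup>2 \<le> \<Lambda>"
      using powr_le_powr_of_le[of "ln M" "ln M" 2 "A + 4"] l A unfolding \<Lambda>_def by (simp add: powr_realpow)
    have "ln (real P) * (1 + ln (real P)) \<le> (A + 4) * (A + 5) * (ln M)\<^sup>2"
      using mult_one_plus_le[OF lP P_bounds(4) l] by (simp add: add.assoc)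
    also have "\<dots> \<le> (A + 4) * (A + 5) * \<Lambda>" using \<open>(ln M)\<^sup>2 \<le> \<Lambda>\<close> A by (intro mult_left_mono) auto
    finally show ?thesis using C0 C1 r by (intro mult_left_mono) auto
  qed
  moreover have "C0 * (L * sqrt (r / real P * (2 * L * (C1 * r * L powr A)))) \<le> C0 * (r * sqrt (2 * C1) * \<Lambda>)"
    using C0 order_trans[OF large_prime_term_le[OF L0 r C1 order_trans[OF y(2) P_bounds(1)]] scale] C1 r
    by (intro mult_left_mono) auto
  ultimately show ?thesis
    unfolding error_coefficient_def \<Lambda>_def M_def by (simp add: algebra_simps)
qed

context moment_bounded_multiplicative
begin

lemma two_thirds_le_ln_N: "2/3 \<le> ln (real N)"
proof -
  have "ln 2 \<le> ln (real N)" using N_ge_2 by simp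
  then show ?thesis using ln2_ge_two_thirds by linarith
qed

lemma ln_mult_sum_minus_bilinear_le_log_log:
  "norm (of_real (ln (real N)) * (\<Sum>n\<in>{1..N}. f n * e (g n))
      - (\<Sum>(n, p)\<in>{(n, p). 1 \<le> n \<and> prime p \<and> n * p \<le> N}. f n * f p * of_real (ln (real p)) * e (g (n * p))))
   \<le> error_coefficient A C0 C1 * real N * ln (ln (real N) + 4) powr (A + 4)"
proof -
  note L = two_thirds_le_ln_N
  define P where "P = nat \<lceil>(ln (real N) + 4) powr (A + 3)\<rceil>"
  define J where "J = nat \<lceil>3 * (A + 3) * log 2 (ln (real N) + 4)\<rceil>"
  have P: "1 \<le> P" using choice_of_P(3)[OF _ A_nonneg P_def] L by simp
  show ?thesis
    using ln_mult_sum_minus_bilinear_le[of g] sum_norm_mult_ln_ratio_le[of N] N_ge_2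
      sum_norm_mult_ln_powerful_part_le[OF P, of J] sum_prime_divisor_pairs_le[OF P]
      error_terms_le[OF A_nonneg C0_nonneg C1_pos L _ P_def J_def, of "real N"]
    by linarith
qed

lemma ln_mult_sum_minus_bilinear_le_powr:
  assumes "0 < \<epsilon>"
  shows "norm (of_real (ln (real N)) * (\<Sum>n\<in>{1..N}. f n * e (g n))
      - (\<Sum>(n, p)\<in>{(n, p). 1 \<le> n \<and> prime p \<and> n * p \<le> N}. f n * f p * of_real (ln (real p)) * e (g (n * p))))
   \<le> error_coefficient A C0 C1 * ((A + 4) / \<epsilon>) powr (A + 4) * 7 powr \<epsilon> * real N * ln (real N) powr \<epsilon>"
proof -
  have "error_coefficient A C0 C1 * real N * ln (ln (real N) + 4) powr (A + 4)
          \<le> error_coefficient A C0 C1 * real N * (((A + 4) / \<epsilon>) powr (A + 4) * 7 powr \<epsilon> * ln (real N) powr \<epsilon>)"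
    using ln_powr_le_powr[OF A_nonneg assms two_thirds_le_ln_N]
      error_coefficient_nonneg[OF A_nonneg C0_nonneg less_imp_le[OF C1_pos]]
    by (intro mult_left_mono) auto
  also have "\<dots> = error_coefficient A C0 C1 * ((A + 4) / \<epsilon>) powr (A + 4) * 7 powr \<epsilon> * real N * ln (real N) powr \<epsilon>"
    by (simp add: mult_ac)
  finally show ?thesis using ln_mult_sum_minus_bilinear_le_log_log[of g] by linarith
qed

end

lemma moment_bounded_multiplicativeI:
  assumes "multiplicative f" and "\<forall>p. prime p \<longrightarrow> norm (f p) \<le> C0"
    and first: "\<forall>X::real. X \<ge> 1 \<longrightarrow> (\<Sum>n\<in>{1..nat \<lfloor>X\<rfloor>}. norm (f n)) \<le> C1 * X"
    and second: "\<forall>X::real. X \<ge> 2 \<longrightarrow> (\<Sum>n\<in>{1..nat \<lfloor>X\<rfloor>}. (norm (f n))\<^sup>2) \<le> C1 * X * (ln X) powr A"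
    and "2 \<le> N" "0 \<le> A" "0 < C1"
  shows "moment_bounded_multiplicative f C0 C1 A N"
proof
  fix x :: nat
  show "(\<Sum>n\<in>{1..x}. norm (f n)) \<le> C1 * real x"
    using first[rule_format, of "real x"] by (cases "x = 0") auto
  assume "2 \<le> x"
  then show "(\<Sum>n\<in>{1..x}. (norm (f n))\<^sup>2) \<le> C1 * real x * ln (real x) powr A"
    using second[rule_format, of "real x"] by simp
qed (use assms in auto)

lemma norm_le_of_ln_mult_le:
  fixes S T :: complex and L K x \<epsilon> :: real
  assumes L: "0 < L" and x: "0 \<le> x" and bound: "norm (of_real L * S - T) \<le> K * x * L powr \<epsilon>"
  shows "norm S \<le> max 1 K * (x / L powr (1 - \<epsilon>) + 1 / L * norm T)"
proof -
  have "L * norm S \<le> norm T + norm (of_real L * S - T)"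
    using L norm_triangle_sub[of "of_real L * S" T] by (simp add: norm_mult)
  then have "norm S \<le> K * (x / L powr (1 - \<epsilon>)) + 1 / L * norm T"
    using L bound by (simp add: powr_diff field_simps)
  also have "\<dots> \<le> max 1 K * (x / L powr (1 - \<epsilon>)) + max 1 K * (1 / L * norm T)"
  proof (rule add_mono)
    show "K * (x / L powr (1 - \<epsilon>)) \<le> max 1 K * (x / L powr (1 - \<epsilon>))"
      using L x by (intro mult_right_mono) auto
    show "1 / L * norm T \<le> max 1 K * (1 / L * norm T)"
      using L mult_right_mono[of 1 "max 1 K" "1 / L * norm T"] by simp
  qed
  finally show ?thesis by (simp add: distrib_left)
qed

theorem mainTheorem5:
  fixes A C0 C1 \<epsilon> :: real
  assumes "A \<ge> 0" and "C0 > 0" and "C1 > 0" and "\<epsilon> > 0"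
  shows "\<exists>K::real. \<forall>(f::nat \<Rightarrow> complex) (g::nat \<Rightarrow> real) (N::nat).
     multiplicative f \<and>
     (\<forall>p::nat. prime p \<longrightarrow> norm (f p) \<le> C0) \<and>
     (\<forall>X::real. X \<ge> 1 \<longrightarrow> (\<Sum>n\<in>{1..nat \<lfloor>X\<rfloor>}. norm (f n)) \<le> C1 * X) \<and>
     (\<forall>X::real. X \<ge> 2 \<longrightarrow> (\<Sum>n\<in>{1..nat \<lfloor>X\<rfloor>}. (norm (f n))\<^sup>2) \<le> C1 * X * (ln X) powr A) \<and>
     N \<ge> 2
     \<longrightarrow> norm (\<Sum>n\<in>{1..N}. f n * e (g n))
         \<le> K * (real N / (ln (real N)) powr (1 - \<epsilon>)
               + 1 / ln (real N) *
                 norm (\<Sum>(n, p)\<in>{(n, p). 1 \<le> n \<and> prime p \<and> n * p \<le> N}.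
                          f n * f p * of_real (ln (real p)) * e (g (n * p))))"
proof (intro exI[of _ "max 1 (error_coefficient A C0 C1 * ((A + 4) / \<epsilon>) powr (A + 4) * 7 powr \<epsilon>)"]
             allI impI, goal_cases)
  case (1 f g N)
  then interpret moment_bounded_multiplicative f C0 C1 A N
    using assms by (intro moment_bounded_multiplicativeI) auto
  show ?case
    using ln_mult_sum_minus_bilinear_le_powr[OF assms(4), of g] two_thirds_le_ln_N
    by (intro norm_le_of_ln_mult_le) auto
qed

end
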